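(* Let $A\in\mathbb{R}^{n\times n}$ be the weighted adjacency matrix of a strongly connected weighted directed graph on $\{1,\ldots,n\}$, and let $P=D_{out}^{-1}A$, $Q=D_{in}^{-1}A^T$. For $\ell\ge 1$ let $S^{(\ell)}=2^{-\ell}\sum_{|\Psi|=\ell}\Psi(P,Q)\Psi(P,Q)^T$, and set $S^{(0)}=I$. Then for every $\ell\ge 1$, $$S^{(\ell)}=\tfrac12\big(PS^{(\ell-1)}P^T+QS^{(\ell-1)}Q^T\big).$$
   Context: The graph has node set $\{1,\ldots,n\}$; $A_{ij}>0$ is the weight of the link $i\to j$ and $A_{ij}=0$ if there is no such link. Strong connectivity means that for any nodes $i,j$ there is a directed walk from $i$ to $j$. $d^{out}_i=\sum_j A_{ij}$, $d^{in}_i=\sum_j A_{ji}$, $D_{out}=\mathrm{Diag}(d^{out}_1,\ldots,d^{out}_n)$, $D_{in}=\mathrm{Diag}(d^{in}_1,\ldots,d^{in}_n)$ (nonsingular under strong connectivity). A walk pattern is a nonempty finite sequence $\Psi=\psi_1\cdots\psi_\ell$ with $\psi_k\in\{d,r\}$, $|\Psi|=\ell$. For $M,N\in\mathbb{R}^{n\times n}$, $\Psi(M,N)=X_1\cdots X_\ell$ with $X_k=M$ if $\psi_k=d$ and $X_k=N$ if $\psi_k=r$. The sum $\sum_{|\Psi|=\ell}$ runs over all $2^\ell$ walk patterns of length $\ell$. *)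

theory Defs
  imports "HOL-Analysis.Analysis"
begin

definition edges :: "real^'n^'n \<Rightarrow> ('n \<times> 'n) set" where
  "edges A = {(i, j). A $ i $ j > 0}"

definition weighted_adjacency :: "real^'n^'n \<Rightarrow> bool" where
  "weighted_adjacency A \<longleftrightarrow> (\<forall>i j. A $ i $ j \<ge> 0)"

definition strongly_connected :: "real^'n^'n \<Rightarrow> bool" where
  "strongly_connected A \<longleftrightarrow> (\<forall>i j. (i, j) \<in> (edges A)\<^sup>+)"

definition Diag :: "real^'n \<Rightarrow> real^'n^'n" where
  "Diag v = (\<chi> i j. if i = j then v $ i else 0)"

definition dout :: "real^'n^'n \<Rightarrow> real^'n" where
  "dout A = (\<chi> i. \<Sum>j\<in>UNIV. A $ i $ j)"

definition din :: "real^'n^'n \<Rightarrow> real^'n" where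
  "din A = (\<chi> i. \<Sum>j\<in>UNIV. A $ j $ i)"

definition Pmat :: "real^'n^'n \<Rightarrow> real^'n^'n" where
  "Pmat A = matrix_inv (Diag (dout A)) ** A"

definition Qmat :: "real^'n^'n \<Rightarrow> real^'n^'n" where
  "Qmat A = matrix_inv (Diag (din A)) ** transpose A"

text \<open>Walk patterns: lists over bool, True = d, False = r.
  Psi(M,N) = X_1 ... X_l.\<close>
definition pattern_eval :: "bool list \<Rightarrow> real^'n^'n \<Rightarrow> real^'n^'n \<Rightarrow> real^'n^'n" where
  "pattern_eval \<Psi> M N = foldr (\<lambda>b X. (if b then M else N) ** X) \<Psi> (mat 1)"

definition Smat :: "real^'n^'n \<Rightarrow> real^'n^'n \<Rightarrow> nat \<Rightarrow> real^'n^'n" where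
  "Smat P Q l = (if l = 0 then mat 1 else
     (1 / 2 ^ l :: real) *\<^sub>R (\<Sum>\<Psi>\<in>{\<Psi>::bool list. length \<Psi> = l}.
        pattern_eval \<Psi> P Q ** transpose (pattern_eval \<Psi> P Q)))"

end

theory Submission
  imports Defs
begin

text \<open>The recursion is purely algebraic and holds for arbitrary matrices P and Q; the
  graph hypotheses only serve to make P and Q the random-walk matrices of the paper.
  Splitting a walk pattern of length k + 1 into its first letter and the remaining
  pattern gives (X Psi)(X Psi)^T = X (Psi Psi^T) X^T for X = P or X = Q, so the unnormalized
  sum for length k + 1 is P T P^T + Q T Q^T, where T is the sum for length k; the
  normalizing factor 2^-(k+1) then splits as 2^-1 2^-k.\<close>

lemma matrix_add_rdistrib:
  fixes A B :: "'a::semiring_1^'n^'m" and C :: "'a^'p^'n"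
  shows "(A + B) ** C = A ** C + B ** C"
  by (vector matrix_matrix_mult_def sum.distrib[symmetric] field_simps)

lemma matrix_mult_sum_left:
  fixes A :: "'a::semiring_1^'n^'m"
  shows "A ** (\<Sum>i\<in>S. f i) = (\<Sum>i\<in>S. A ** f i)"
  by (induction S rule: infinite_finite_induct) (simp_all add: matrix_add_ldistrib)

lemma matrix_mult_sum_right:
  fixes C :: "'a::semiring_1^'p^'n"
  shows "(\<Sum>i\<in>S. f i) ** C = (\<Sum>i\<in>S. f i ** C)"
  by (induction S rule: infinite_finite_induct) (simp_all add: matrix_add_rdistrib)

lemma sum_bool_lists_length_Suc:
  "(\<Sum>xs\<in>{xs::bool list. length xs = Suc k}. f xs) =
     (\<Sum>xs\<in>{xs. length xs = k}. f (True # xs)) + (\<Sum>xs\<in>{xs. length xs = k}. f (False # xs))"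
proof -
  let ?L = "{xs::bool list. length xs = k}"
  have fin: "finite ?L"
    using finite_lists_length_eq[of "UNIV :: bool set" k] by simp
  have by_head: "{xs::bool list. length xs = Suc k} = Cons True ` ?L \<union> Cons False ` ?L"
    by (auto simp: length_Suc_conv image_iff)
  have "(\<Sum>xs\<in>{xs::bool list. length xs = Suc k}. f xs) =
      sum f (Cons True ` ?L) + sum f (Cons False ` ?L)"
    unfolding by_head using fin by (subst sum.union_disjoint) auto
  then show ?thesis
    by (simp add: sum.reindex)
qed

lemma pattern_eval_Cons:
  "pattern_eval (b # \<Psi>) M N = (if b then M else N) ** pattern_eval \<Psi> M N"
  by (simp add: pattern_eval_def)

definition pattern_gram :: "real^'n^'n \<Rightarrow> real^'n^'n \<Rightarrow> nat \<Rightarrow> real^'n^'n" where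
  "pattern_gram P Q l = (\<Sum>\<Psi>\<in>{\<Psi>::bool list. length \<Psi> = l}.
     pattern_eval \<Psi> P Q ** transpose (pattern_eval \<Psi> P Q))"

lemma Smat_eq_pattern_gram: "Smat P Q l = (1 / 2 ^ l :: real) *\<^sub>R pattern_gram P Q l"
proof (cases "l = 0")
  case True
  then have "{\<Psi>::bool list. length \<Psi> = l} = {[]}" by auto
  with True show ?thesis
    by (simp add: Smat_def pattern_gram_def pattern_eval_def)
qed (simp add: Smat_def pattern_gram_def)

lemma pattern_gram_Suc:
  "pattern_gram P Q (Suc k) =
     P ** pattern_gram P Q k ** transpose P + Q ** pattern_gram P Q k ** transpose Q"
proof -
  have gram_Cons: "pattern_eval (b # \<Psi>) P Q ** transpose (pattern_eval (b # \<Psi>) P Q) =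
      X ** (pattern_eval \<Psi> P Q ** transpose (pattern_eval \<Psi> P Q)) ** transpose X"
    if "X = (if b then P else Q)" for b \<Psi> X
    using that by (simp add: pattern_eval_Cons matrix_transpose_mul matrix_mul_assoc)
  show ?thesis
    unfolding pattern_gram_def sum_bool_lists_length_Suc
    by (simp add: gram_Cons matrix_mult_sum_left matrix_mult_sum_right)
qed

lemma Smat_Suc:
  "Smat P Q (Suc k) =
     (1/2 :: real) *\<^sub>R (P ** Smat P Q k ** transpose P + Q ** Smat P Q k ** transpose Q)"
  by (simp add: Smat_eq_pattern_gram pattern_gram_Suc matrix_scalar_ac scalar_matrix_assoc
      scaleR_add_right)

theorem lemma1:
  fixes A :: "real^'n^'n" and l :: nat
  assumes "weighted_adjacency A" and "strongly_connected A" and "l \<ge> 1"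
  shows "Smat (Pmat A) (Qmat A) l =
    (1/2 :: real) *\<^sub>R (Pmat A ** Smat (Pmat A) (Qmat A) (l - 1) ** transpose (Pmat A)
            + Qmat A ** Smat (Pmat A) (Qmat A) (l - 1) ** transpose (Qmat A))"
proof -
  obtain k where "l = Suc k"
    using \<open>l \<ge> 1\<close> by (cases l) auto
  then show ?thesis
    by (simp add: Smat_Suc)
qed

end
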